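(* Fix $\alpha\in(0,1)$ and consider $\mathrm{EVaR}_\alpha:\mathcal P([0,1])\to\mathbb R$. For every $c\in\mathbb R$, the sets $\{\kappa\in\mathcal P([0,1]):\mathrm{EVaR}_\alpha(\kappa)\le c\}$ and $\{\kappa\in\mathcal P([0,1]):\mathrm{EVaR}_\alpha(\kappa)\ge c\}$ are closed in the weak topology, and consequently compact.
   Context: $\mathcal P([0,1])$ denotes the Borel probability measures on $[0,1]$ with the weak topology. With $\rho:=-\log(1-\alpha)$ and $X\sim\kappa$, $\mathrm{EVaR}_\alpha(\kappa):=\inf_{z>0}\frac1z(\log\mathbb E_\kappa[e^{zX}]+\rho)$. *)

theory Defs
  imports "HOL-Probability.Probability"
begin

definition prob_measures_01 :: "real measure set" where
  "prob_measures_01 = {M. prob_space M \<and> sets M = sets (restrict_space borel {0..1})}"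

text \<open>Weak topology: the coarsest topology on prob_measures_01 making
  M \<mapsto> integral of f w.r.t. M continuous for every continuous (hence bounded) f on [0,1].\<close>
definition weak_topology_01 :: "real measure topology" where
  "weak_topology_01 =
     pullback_topology prob_measures_01
       (\<lambda>M. restrict (\<lambda>f. LINT x|M. f x) {f. continuous_on {0..1} f})
       (product_topology (\<lambda>_. euclideanreal) {f. continuous_on {0..1} f})"

definition EVaR :: "real \<Rightarrow> real measure \<Rightarrow> real" where
  "EVaR \<alpha> M = (INF z\<in>{0<..}. (1 / z) * (ln (LINT x|M. exp (z * x)) + (- ln (1 - \<alpha>))))"

end

theory Submission
  imports Defs
begin

text \<open>The weak topology is the pullback of the product topology under
  \<open>M \<mapsto> (\<integral> f dM)\<^sub>f\<close>, \<open>f \<in> C[0,1]\<close>. The image of the probability measures lies in a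
  product of compact intervals and is closed: a limit of integral functionals is still a
  normalized positive linear functional, and such a functional is an integral (Bernstein
  polynomials produce discrete approximating measures, Helly's theorem a limit). Hence the
  whole space is compact, and it remains to show that both level sets are closed.

  With the cumulant \<open>K\<^sub>M(z) = ln \<integral> exp (z x) dM\<close>, which is continuous in \<open>M\<close>, we have
  \<open>EVaR(M) = inf\<^sub>z\<^sub>>\<^sub>0 (K\<^sub>M(z) + \<rho>)/z\<close>, an infimum of continuous functions, hence upper
  semicontinuous. Lower semicontinuity holds because \<open>K\<^sub>M\<close> is nonnegative and
  nondecreasing and \<open>K\<^sub>M(z)/z\<close> is nondecreasing by Jensen's inequality, so strict lower
  bounds on EVaR are witnessed by finitely many values of the cumulant.\<close>

lemma continuous_map_real_ln:
  assumes "continuous_map X euclideanreal f" "\<And>x. x \<in> topspace X \<Longrightarrow> 0 < f x"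
  shows "continuous_map X euclideanreal (\<lambda>x. ln (f x))"
  using assms by (force simp: continuous_map_atin intro!: tendsto_ln)

lemma compactin_pullback_topology:
  assumes "compactin T (f ` A)"
  shows "compactin (pullback_topology A f T) A"
  unfolding compactin_def
proof (intro conjI allI impI)
  show "A \<subseteq> topspace (pullback_topology A f T)"
    using compactin_subset_topspace[OF assms] by (auto simp: topspace_pullback_topology)
  fix \<U> assume \<U>: "(\<forall>U\<in>\<U>. openin (pullback_topology A f T) U) \<and> A \<subseteq> \<Union>\<U>"
  then have "\<U> \<subseteq> (\<lambda>V. f -` V \<inter> A) ` {V. openin T V}"
    by (auto simp: openin_pullback_topology)
  then obtain \<V> where \<V>: "\<V> \<subseteq> {V. openin T V}" "\<U> = (\<lambda>V. f -` V \<inter> A) ` \<V>"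
    by (auto simp: subset_image_iff)
  then have "f ` A \<subseteq> \<Union>\<V>"
    using \<U> by blast
  then obtain \<W> where \<W>: "finite \<W>" "\<W> \<subseteq> \<V>" "f ` A \<subseteq> \<Union>\<W>"
    using compactinD[OF assms, of \<V>] \<V>(1) by blast
  have "A \<subseteq> \<Union>((\<lambda>V. f -` V \<inter> A) ` \<W>)"
    using \<W>(3) by blast
  moreover have "(\<lambda>V. f -` V \<inter> A) ` \<W> \<subseteq> \<U>"
    using \<W>(2) \<V>(2) by blast
  ultimately show "\<exists>\<F>. finite \<F> \<and> \<F> \<subseteq> \<U> \<and> A \<subseteq> \<Union>\<F>"
    using \<W>(1) by blast
qed

lemma continuous_map_closure_of_into_closed:
  assumes "continuous_map X euclideanreal h" "closed C" "h ` S \<subseteq> C"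
    and "x \<in> X closure_of S"
  shows "h x \<in> C"
proof -
  have "h x \<in> euclideanreal closure_of (h ` S)"
    using continuous_map_image_closure_subset[OF assms(1)] assms(4) by blast
  also have "\<dots> \<subseteq> C"
    using assms(2,3) by (intro closure_of_minimal) simp_all
  finally show ?thesis .
qed

section \<open>The weak topology on probability measures on [0,1]\<close>

abbreviation continuous_01 :: "(real \<Rightarrow> real) set" where
  "continuous_01 \<equiv> {f. continuous_on {0..1} f}"

definition integrals_01 :: "real measure \<Rightarrow> (real \<Rightarrow> real) \<Rightarrow> real" where
  "integrals_01 M = restrict (\<lambda>f. LINT x|M. f x) continuous_01"

abbreviation functionals_01 :: "((real \<Rightarrow> real) \<Rightarrow> real) topology" where
  "functionals_01 \<equiv> product_topology (\<lambda>_. euclideanreal) continuous_01"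

lemma weak_topology_01_pullback:
  "weak_topology_01 = pullback_topology prob_measures_01 integrals_01 functionals_01"
  unfolding weak_topology_01_def integrals_01_def ..

lemma integrals_01_in_topspace: "integrals_01 M \<in> topspace functionals_01"
  by (simp add: integrals_01_def)

lemma topspace_weak_topology_01: "topspace weak_topology_01 = prob_measures_01"
  by (auto simp: weak_topology_01_pullback topspace_pullback_topology integrals_01_def)

lemma continuous_map_integral_01:
  assumes "continuous_on {0..1} f"
  shows "continuous_map weak_topology_01 euclideanreal (\<lambda>M. LINT x|M. f x)"
proof -
  have "continuous_map weak_topology_01 euclideanreal ((\<lambda>L. L f) \<circ> integrals_01)"
    unfolding weak_topology_01_pullback
    using assms by (intro continuous_map_pullback continuous_map_product_projection) simp
  then show ?thesis
    using assms by (simp add: integrals_01_def o_def)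
qed

lemma
  assumes "M \<in> prob_measures_01"
  shows prob_measures_01_prob_space: "prob_space M"
    and sets_prob_measures_01: "sets M = sets (restrict_space borel {0..1})"
    and space_prob_measures_01: "space M = {0..1}"
  using assms sets_eq_imp_space_eq[of M "restrict_space borel {0..1}"]
  by (auto simp: prob_measures_01_def space_restrict_space)

lemma continuous_on_01_bounded:
  fixes f :: "real \<Rightarrow> real"
  assumes "continuous_on {0..1} f"
  shows "\<exists>B. \<forall>x\<in>{0..1}. \<bar>f x\<bar> \<le> B"
  using compact_imp_bounded[OF compact_continuous_image[OF assms]] by (auto simp: bounded_iff)

lemma integrable_continuous_01:
  fixes f :: "real \<Rightarrow> real"
  assumes M: "M \<in> prob_measures_01" and f: "continuous_on {0..1} f"
  shows "integrable M f"
proof -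
  interpret prob_space M
    using M by (rule prob_measures_01_prob_space)
  obtain B where B: "\<And>x. x \<in> {0..1} \<Longrightarrow> \<bar>f x\<bar> \<le> B"
    using continuous_on_01_bounded[OF f] by blast
  have meas: "f \<in> borel_measurable M"
    using borel_measurable_continuous_on_restrict[OF f]
    by (simp add: measurable_cong_sets[OF sets_prob_measures_01[OF M] refl])
  show ?thesis
    by (rule integrable_const_bound[where B = B]) (use B meas in \<open>auto simp: space_prob_measures_01[OF M]\<close>)
qed

section \<open>Normalized positive functionals on C[0,1] are integrals\<close>

lemma continuous_on_Bernstein: "continuous_on {0..1} (Bernstein n k)"
  unfolding Bernstein_def by (intro continuous_intros)

lemma grid_point_01: "k \<le> n \<Longrightarrow> real k / real n \<in> {0..1}"
  by (cases "n = 0") (auto simp: divide_le_eq_1)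

lemma continuous_on_clamp_01:
  fixes f :: "real \<Rightarrow> real"
  assumes "continuous_on {0..1} f"
  shows "continuous_on UNIV (\<lambda>x. f (clamp 0 1 x))"
  by (rule clamp_continuous_on) (use assms in \<open>simp add: cbox_interval\<close>)

lemma clamp_01: "clamp 0 1 (x::real) \<in> {0..1}"
  using clamp_in_interval[of 0 1 x] by (simp add: cbox_interval)

lemma clamp_01_id: "(x::real) \<in> {0..1} \<Longrightarrow> clamp 0 1 x = x"
  using clamp_cancel_cbox[of x 0 1] by (simp add: cbox_interval)

locale normalized_positive_functional =
  fixes L :: "(real \<Rightarrow> real) \<Rightarrow> real"
  assumes extensional: "L \<in> extensional continuous_01"
    and normalized: "L (\<lambda>_. 1) = 1"
    and linear: "\<lbrakk>continuous_on {0..1} f; continuous_on {0..1} g\<rbrakk>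
                   \<Longrightarrow> L (\<lambda>x. a * f x + g x) = a * L f + L g"
    and positive: "\<lbrakk>continuous_on {0..1} f; \<And>x. x \<in> {0..1} \<Longrightarrow> 0 \<le> f x\<rbrakk> \<Longrightarrow> 0 \<le> L f"
begin

lemma zero: "L (\<lambda>_. 0) = 0"
  using linear[of "\<lambda>_. 0" "\<lambda>_. 0" 1] by simp

lemma const: "L (\<lambda>_. c) = c"
  using linear[of "\<lambda>_. 1" "\<lambda>_. 0" c] by (simp add: zero normalized)

lemma diff:
  assumes "continuous_on {0..1} f" "continuous_on {0..1} g"
  shows "L (\<lambda>x. f x - g x) = L f - L g"
  using linear[OF assms(2,1), of "-1"] by simp

lemma sum:
  assumes "finite K" "\<And>k. k \<in> K \<Longrightarrow> continuous_on {0..1} (h k)"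
  shows "L (\<lambda>x. \<Sum>k\<in>K. a k * h k x) = (\<Sum>k\<in>K. a k * L (h k))"
  using assms
proof (induction K rule: finite_induct)
  case empty
  then show ?case by (simp add: zero)
next
  case (insert k K)
  then have "continuous_on {0..1} (\<lambda>x. \<Sum>k\<in>K. a k * h k x)"
    by (auto intro!: continuous_intros)
  then show ?case
    using insert by (simp add: linear)
qed

lemma abs_diff_le:
  assumes f: "continuous_on {0..1} f" and g: "continuous_on {0..1} g"
    and le: "\<And>x. x \<in> {0..1} \<Longrightarrow> \<bar>f x - g x\<bar> \<le> e"
  shows "\<bar>L f - L g\<bar> \<le> e"
proof -
  have fg: "continuous_on {0..1} (\<lambda>x. f x - g x)"
    using f g by (intro continuous_intros)
  have L_shift: "L (\<lambda>x. s * (f x - g x) + e) = s * (L f - L g) + e" for s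
    using linear[OF fg, of "\<lambda>_. e" s] by (simp add: diff[OF f g] const)
  have "0 \<le> s * (L f - L g) + e" if "s = 1 \<or> s = -1" for s
  proof -
    have "0 \<le> s * (f x - g x) + e" if "x \<in> {0..1}" for x
      using le[OF that] \<open>s = 1 \<or> s = -1\<close> by (auto simp: abs_le_iff)
    then show ?thesis
      using fg by (subst L_shift[symmetric], intro positive) (auto intro!: continuous_intros)
  qed
  from this[of 1] this[of "-1"] show ?thesis
    by (simp add: abs_le_iff)
qed

definition bernstein_weight :: "nat \<Rightarrow> nat \<Rightarrow> real" where
  "bernstein_weight n k = L (Bernstein n k)"

lemma bernstein_weight_nonneg: "0 \<le> bernstein_weight n k"
  unfolding bernstein_weight_def
  by (intro positive continuous_on_Bernstein) (auto intro: Bernstein_nonneg)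

lemma sum_bernstein_weight: "(\<Sum>k\<le>n. bernstein_weight n k) = 1"
  using sum[of "{..n}" "Bernstein n" "\<lambda>_. 1"]
  by (simp add: bernstein_weight_def continuous_on_Bernstein normalized)

lemma bernstein_sums_tendsto:
  assumes f: "continuous_on {0..1} f"
  shows "(\<lambda>n. \<Sum>k\<le>n. f (real k / real n) * bernstein_weight n k) \<longlonglongrightarrow> L f"
proof (rule LIMSEQ_I)
  fix r :: real assume "0 < r"
  then obtain N where N: "\<And>n x. N \<le> n \<Longrightarrow> x \<in> {0..1}
      \<Longrightarrow> \<bar>f x - (\<Sum>k\<le>n. f (k / n) * Bernstein n k x)\<bar> < r / 2"
    using Bernstein_Weierstrass[OF f, of "r / 2"] by auto
  have "\<bar>(\<Sum>k\<le>n. f (real k / real n) * bernstein_weight n k) - L f\<bar> < r" if "N \<le> n" for n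
  proof -
    have "L (\<lambda>x. \<Sum>k\<le>n. f (k / n) * Bernstein n k x) = (\<Sum>k\<le>n. f (k / n) * bernstein_weight n k)"
      unfolding bernstein_weight_def by (rule sum) (auto simp: continuous_on_Bernstein)
    moreover have "continuous_on {0..1} (\<lambda>x. \<Sum>k\<le>n. f (k / n) * Bernstein n k x)"
      by (intro continuous_on_sum continuous_on_mult_left continuous_on_Bernstein)
    then have "\<bar>L f - L (\<lambda>x. \<Sum>k\<le>n. f (k / n) * Bernstein n k x)\<bar> \<le> r / 2"
      by (rule abs_diff_le[OF f]) (rule less_imp_le[OF N[OF that]])
    ultimately have "\<bar>(\<Sum>k\<le>n. f (real k / real n) * bernstein_weight n k) - L f\<bar> \<le> r / 2"
      by (simp add: abs_minus_commute)
    then show ?thesis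
      using \<open>0 < r\<close> by linarith
  qed
  then show "\<exists>N. \<forall>n\<ge>N. norm ((\<Sum>k\<le>n. f (real k / real n) * bernstein_weight n k) - L f) < r"
    by auto
qed

definition bernstein_pmf :: "nat \<Rightarrow> nat pmf" where
  "bernstein_pmf n = embed_pmf (\<lambda>k. if k \<le> n then bernstein_weight n k else 0)"

lemma pmf_bernstein_pmf: "pmf (bernstein_pmf n) k = (if k \<le> n then bernstein_weight n k else 0)"
  unfolding bernstein_pmf_def
proof (rule pmf_embed_pmf)
  have "(\<integral>\<^sup>+k. ennreal (if k \<le> n then bernstein_weight n k else 0) \<partial>count_space UNIV)
      = (\<Sum>k\<le>n. ennreal (bernstein_weight n k))"
    by (subst nn_integral_count_space'[of "{..n}"]) auto
  also have "\<dots> = 1"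
    by (simp add: sum_ennreal bernstein_weight_nonneg sum_bernstein_weight)
  finally show "(\<integral>\<^sup>+k. ennreal (if k \<le> n then bernstein_weight n k else 0) \<partial>count_space UNIV) = 1" .
qed (simp add: bernstein_weight_nonneg)

lemma set_pmf_bernstein_pmf: "set_pmf (bernstein_pmf n) \<subseteq> {..n}"
  by (auto simp: set_pmf_iff pmf_bernstein_pmf split: if_splits)

definition bernstein_measure :: "nat \<Rightarrow> real measure" where
  "bernstein_measure n = distr (measure_pmf (bernstein_pmf n)) borel (\<lambda>k. real k / real n)"

lemma real_distribution_bernstein_measure: "real_distribution (bernstein_measure n)"
proof -
  have "prob_space (bernstein_measure n)"
    unfolding bernstein_measure_def
    by (rule prob_space.prob_space_distr) (simp_all add: prob_space_measure_pmf)
  then show ?thesis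
    by (simp add: real_distribution_def real_distribution_axioms_def bernstein_measure_def)
qed

lemma integral_bernstein_measure:
  assumes "g \<in> borel_measurable borel"
  shows "(LINT x|bernstein_measure n. g x) = (\<Sum>k\<le>n. g (real k / real n) * bernstein_weight n k)"
proof -
  have "(LINT x|bernstein_measure n. g x) = (LINT k|measure_pmf (bernstein_pmf n). g (real k / real n))"
    unfolding bernstein_measure_def using assms by (intro integral_distr) auto
  also have "\<dots> = (\<Sum>k\<le>n. g (real k / real n) * pmf (bernstein_pmf n) k)"
    using set_pmf_bernstein_pmf by (intro integral_measure_pmf_real) auto
  also have "\<dots> = (\<Sum>k\<le>n. g (real k / real n) * bernstein_weight n k)"
    by (simp add: pmf_bernstein_pmf)
  finally show ?thesis .
qed

lemma tight_bernstein_measure: "tight bernstein_measure"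
proof -
  have "measure (bernstein_measure n) {-1<..1} = 1" for n
  proof -
    have "measure (bernstein_measure n) {-1<..1}
        = measure (measure_pmf (bernstein_pmf n)) ((\<lambda>k. real k / real n) -` {-1<..1})"
      unfolding bernstein_measure_def by (subst measure_distr) auto
    also have "\<dots> = 1"
    proof (subst measure_pmf.prob_eq_1)
      have "real k / real n \<in> {-1<..1}" if "k \<in> set_pmf (bernstein_pmf n)" for k
      proof -
        have "k \<le> n"
          using set_pmf_bernstein_pmf that by blast
        then have "0 \<le> real k / real n" "real k / real n \<le> 1"
          using grid_point_01 by auto
        then show ?thesis
          unfolding greaterThanAtMost_iff by linarith
      qed
      then show "AE k in measure_pmf (bernstein_pmf n). k \<in> (\<lambda>k. real k / real n) -` {-1<..1}"
        by (simp add: AE_measure_pmf_iff)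
    qed auto
    finally show ?thesis .
  qed
  then show ?thesis
    unfolding tight_def using real_distribution_bernstein_measure
    by (intro conjI allI impI exI[of _ "-1"] exI[of _ "1::real"]) auto
qed

text \<open>Helly's theorem yields a limit measure on the whole real line; composing with
  \<open>clamp 0 1\<close> moves it onto [0,1] without changing integrals of functions on [0,1].\<close>

lemma bernstein_limit:
  obtains M where "real_distribution M"
    and "\<And>f. continuous_on {0..1} f \<Longrightarrow> (LINT x|M. f (clamp 0 1 x)) = L f"
proof -
  obtain r M where r: "strict_mono r" and M: "real_distribution M"
    and conv: "weak_conv_m (bernstein_measure \<circ> id \<circ> r) M"
    using tight_imp_convergent_subsubsequence[OF tight_bernstein_measure strict_mono_id] by blast
  have "(LINT x|M. f (clamp 0 1 x)) = L f" if f: "continuous_on {0..1} f" for f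
  proof -
    obtain B where B: "\<And>x. x \<in> {0..1} \<Longrightarrow> \<bar>f x\<bar> \<le> B"
      using continuous_on_01_bounded[OF f] by blast
    have cont: "continuous_on UNIV (\<lambda>x. f (clamp 0 1 x))"
      using f by (rule continuous_on_clamp_01)
    have bound: "norm (f (clamp 0 1 x)) \<le> B" for x
      using B[OF clamp_01] by simp
    have "(\<lambda>n. LINT x|bernstein_measure (r n). f (clamp 0 1 x)) \<longlonglongrightarrow> (LINT x|M. f (clamp 0 1 x))"
      using weak_conv_imp_integral_bdd_continuous_conv[OF _ M conv, of "\<lambda>x. f (clamp 0 1 x)" B]
        real_distribution_bernstein_measure cont bound
      by (simp add: continuous_on_eq_continuous_at)
    moreover have "(\<lambda>n. LINT x|bernstein_measure (r n). f (clamp 0 1 x)) \<longlonglongrightarrow> L f"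
    proof -
      have "(LINT x|bernstein_measure n. f (clamp 0 1 x))
          = (\<Sum>k\<le>n. f (real k / real n) * bernstein_weight n k)" for n
        using cont grid_point_01
        by (simp add: integral_bernstein_measure borel_measurable_continuous_onI clamp_01_id)
      then show ?thesis
        using LIMSEQ_subseq_LIMSEQ[OF bernstein_sums_tendsto[OF f] r] by (simp add: o_def)
    qed
    ultimately show ?thesis
      by (rule LIMSEQ_unique)
  qed
  with M that show ?thesis by blast
qed

theorem integral_representation:
  obtains N where "N \<in> prob_measures_01" "integrals_01 N = L"
proof -
  obtain M where M: "real_distribution M"
    and integral_M: "\<And>f. continuous_on {0..1} f \<Longrightarrow> (LINT x|M. f (clamp 0 1 x)) = L f"
    using bernstein_limit by blast
  interpret M: real_distribution M by (rule M)
  have "clamp 0 1 \<in> borel_measurable M"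
    using borel_measurable_continuous_onI[OF continuous_on_clamp_01[of "\<lambda>x. x"]]
    by (simp add: measurable_cong_sets[OF M.events_eq_borel refl])
  then have clamp_measurable: "clamp 0 1 \<in> M \<rightarrow>\<^sub>M restrict_space borel {0..1}"
    using clamp_01 by (intro measurable_restrict_space2) auto
  define N where "N = distr M (restrict_space borel {0..1}) (clamp 0 1)"
  have "N \<in> prob_measures_01"
    unfolding prob_measures_01_def N_def using M.prob_space_distr[OF clamp_measurable] by simp
  moreover have "integrals_01 N = L"
  proof
    fix f
    show "integrals_01 N f = L f"
    proof (cases "continuous_on {0..1} f")
      case True
      then have "(LINT x|N. f x) = (LINT x|M. f (clamp 0 1 x))"
        unfolding N_def by (intro integral_distr[OF clamp_measurable] borel_measurable_continuous_on_restrict)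
      then show ?thesis
        using True integral_M by (simp add: integrals_01_def)
    next
      case False
      then show ?thesis
        using extensional by (simp add: integrals_01_def extensional_def)
    qed
  qed
  ultimately show ?thesis
    using that by blast
qed

end

section \<open>Compactness of the space of measures\<close>

lemma normalized_positive_functional_integrals_01:
  assumes M: "M \<in> prob_measures_01"
  shows "normalized_positive_functional (integrals_01 M)"
proof
  interpret prob_space M
    using M by (rule prob_measures_01_prob_space)
  note integrable = integrable_continuous_01[OF M]
  show "integrals_01 M \<in> extensional continuous_01"
    by (simp add: integrals_01_def)
  show "integrals_01 M (\<lambda>_. 1) = 1"
    by (simp add: integrals_01_def prob_space)
  fix f g :: "real \<Rightarrow> real"
  assume f: "continuous_on {0..1} f"
  show "integrals_01 M (\<lambda>x. a * f x + g x) = a * integrals_01 M f + integrals_01 M g"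
    if g: "continuous_on {0..1} g" for a
  proof -
    have "continuous_on {0..1} (\<lambda>x. a * f x + g x)"
      using f g by (intro continuous_intros)
    then show ?thesis
      using f g integrable[OF f] integrable[OF g] by (simp add: integrals_01_def)
  qed
  show "0 \<le> integrals_01 M f" if nonneg: "\<And>x. x \<in> {0..1} \<Longrightarrow> 0 \<le> f x"
  proof -
    have "0 \<le> (LINT x|M. f x)"
      by (rule Bochner_Integration.integral_nonneg) (simp add: space_prob_measures_01[OF M] nonneg)
    then show ?thesis
      using f by (simp add: integrals_01_def)
  qed
qed

lemma normalized_positive_functional_closure:
  assumes L: "L \<in> functionals_01 closure_of (integrals_01 ` prob_measures_01)"
  shows "normalized_positive_functional L"
proof
  note closed_condition = continuous_map_closure_of_into_closed[OF _ _ _ L]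
  have image: "normalized_positive_functional (integrals_01 M)" if "M \<in> prob_measures_01" for M
    using that by (rule normalized_positive_functional_integrals_01)
  have eval: "continuous_map functionals_01 euclideanreal (\<lambda>L. L f)" if "continuous_on {0..1} f" for f
    using that by (intro continuous_map_product_projection) simp
  have "L \<in> topspace functionals_01"
    using closure_of_subset_topspace[of functionals_01] L by blast
  then show "L \<in> extensional continuous_01"
    by (simp add: PiE_def)
  have "L (\<lambda>_. 1) \<in> {1}"
    by (rule closed_condition[OF eval])
      (auto simp: normalized_positive_functional.normalized[OF image])
  then show "L (\<lambda>_. 1) = 1"
    by simp
  fix f g :: "real \<Rightarrow> real"
  assume f: "continuous_on {0..1} f"
  show "L (\<lambda>x. a * f x + g x) = a * L f + L g" if g: "continuous_on {0..1} g" for a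
  proof -
    have "continuous_on {0..1} (\<lambda>x. a * f x + g x)"
      using f g by (intro continuous_intros)
    then have "continuous_map functionals_01 euclideanreal (\<lambda>L. L (\<lambda>x. a * f x + g x) - (a * L f + L g))"
      by (intro continuous_map_diff continuous_map_add continuous_map_real_mult_left eval f g)
    then have "L (\<lambda>x. a * f x + g x) - (a * L f + L g) \<in> {0}"
      by (rule closed_condition) (auto simp: normalized_positive_functional.linear[OF image] f g)
    then show ?thesis
      by simp
  qed
  show "0 \<le> L f" if "\<And>x. x \<in> {0..1} \<Longrightarrow> 0 \<le> f x"
  proof -
    have "L f \<in> {0..}"
      by (rule closed_condition[OF eval[OF f]])
        (use normalized_positive_functional.positive[OF image f that] in auto)
    then show ?thesis
      by simp
  qed
qed

lemma closedin_integrals_01_image: "closedin functionals_01 (integrals_01 ` prob_measures_01)"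
proof -
  have "functionals_01 closure_of (integrals_01 ` prob_measures_01) \<subseteq> integrals_01 ` prob_measures_01"
  proof
    fix L assume "L \<in> functionals_01 closure_of (integrals_01 ` prob_measures_01)"
    then interpret normalized_positive_functional L
      by (rule normalized_positive_functional_closure)
    obtain N where "N \<in> prob_measures_01" "integrals_01 N = L"
      by (rule integral_representation)
    then show "L \<in> integrals_01 ` prob_measures_01"
      by blast
  qed
  moreover have "integrals_01 ` prob_measures_01 \<subseteq> topspace functionals_01"
    using integrals_01_in_topspace by blast
  ultimately show ?thesis
    using closure_of_subset_eq by blast
qed

lemma compactin_prob_measures_01: "compactin weak_topology_01 prob_measures_01"
proof -
  have "\<forall>f::real \<Rightarrow> real. \<exists>B. continuous_on {0..1} f \<longrightarrow> (\<forall>x\<in>{0..1}. \<bar>f x\<bar> \<le> B)"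
    using continuous_on_01_bounded by blast
  from choice[OF this] obtain B
    where B: "\<forall>f::real \<Rightarrow> real. continuous_on {0..1} f \<longrightarrow> (\<forall>x\<in>{0..1}. \<bar>f x\<bar> \<le> B f)"
    by blast
  have "integrals_01 ` prob_measures_01 \<subseteq> (\<Pi>\<^sub>E f\<in>continuous_01. {-B f..B f})"
  proof clarify
    fix M assume M: "M \<in> prob_measures_01"
    interpret normalized_positive_functional "integrals_01 M"
      using M by (rule normalized_positive_functional_integrals_01)
    have "integrals_01 M f \<in> {-B f..B f}" if f: "continuous_on {0..1} f" for f
    proof -
      have "\<bar>integrals_01 M f - integrals_01 M (\<lambda>_. 0)\<bar> \<le> B f"
        by (rule abs_diff_le[OF f]) (use B f in auto)
      then show ?thesis
        by (simp add: zero abs_le_iff)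
    qed
    then show "integrals_01 M \<in> (\<Pi>\<^sub>E f\<in>continuous_01. {-B f..B f})"
      using extensional by (auto simp: PiE_iff)
  qed
  moreover have "compactin functionals_01 (\<Pi>\<^sub>E f\<in>continuous_01. {-B f..B f})"
    by (simp add: compactin_PiE)
  ultimately have "compactin functionals_01 (integrals_01 ` prob_measures_01)"
    using closed_compactin closedin_integrals_01_image by blast
  then show ?thesis
    unfolding weak_topology_01_pullback by (rule compactin_pullback_topology)
qed

section \<open>Semicontinuity of EVaR\<close>

definition cumulant :: "real measure \<Rightarrow> real \<Rightarrow> real" where
  "cumulant M z = ln (LINT x|M. exp (z * x))"

lemma integral_exp_mono:
  assumes M: "M \<in> prob_measures_01" and "z' \<le> z"
  shows "(LINT x|M. exp (z' * x)) \<le> (LINT x|M. exp (z * x))"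
proof -
  have integrable: "integrable M (\<lambda>x. exp (t * x))" for t
    by (rule integrable_continuous_01[OF M]) (intro continuous_intros)
  show ?thesis
    using assms(2) by (intro integral_mono integrable) (auto simp: space_prob_measures_01[OF M] mult_right_mono)
qed

lemma integral_exp_ge_1:
  assumes M: "M \<in> prob_measures_01" and "0 \<le> z"
  shows "1 \<le> (LINT x|M. exp (z * x))"
proof -
  interpret prob_space M
    using M by (rule prob_measures_01_prob_space)
  show ?thesis
    using integral_exp_mono[OF assms] by (simp add: prob_space)
qed

lemma cumulant_nonneg: "M \<in> prob_measures_01 \<Longrightarrow> 0 \<le> z \<Longrightarrow> 0 \<le> cumulant M z"
  unfolding cumulant_def using integral_exp_ge_1 by simp

lemma cumulant_mono:
  assumes "M \<in> prob_measures_01" "0 \<le> z'" "z' \<le> z"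
  shows "cumulant M z' \<le> cumulant M z"
  unfolding cumulant_def using integral_exp_ge_1[OF assms(1,2)] integral_exp_mono[OF assms(1,3)] by simp

lemma cumulant_ratio_mono:
  assumes M: "M \<in> prob_measures_01" and z: "0 < z'" "z' \<le> z"
  shows "cumulant M z' / z' \<le> cumulant M z / z"
proof -
  interpret prob_space M
    using M by (rule prob_measures_01_prob_space)
  define p where "p = z / z'"
  have p: "1 \<le> p"
    unfolding p_def using z by simp
  have powr_p: "exp (z' * x) powr p = exp (z * x)" for x
    unfolding p_def using z by (simp add: powr_def)
  have "(LINT x|M. exp (z' * x)) powr p \<le> (LINT x|M. exp (z' * x) powr p)"
  proof (rule jensens_inequality[where I = "{0<..}" and a = 0])
    show "integrable M (\<lambda>x. exp (z' * x))" "integrable M (\<lambda>x. exp (z' * x) powr p)"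
      unfolding powr_p by (intro integrable_continuous_01[OF M] continuous_intros)+
    show "convex_on {0<..} (\<lambda>x. x powr p)"
      using p by (rule powr_convex)
  qed auto
  also have "\<dots> = (LINT x|M. exp (z * x))"
    unfolding powr_p ..
  finally have "ln ((LINT x|M. exp (z' * x)) powr p) \<le> cumulant M z"
    unfolding cumulant_def using integral_exp_ge_1[OF M, of z'] integral_exp_ge_1[OF M, of z] z
    by (subst ln_le_cancel_iff) auto
  then have "p * cumulant M z' \<le> cumulant M z"
    using integral_exp_ge_1[OF M, of z'] z by (simp add: cumulant_def ln_powr)
  then show ?thesis
    using z unfolding p_def by (simp add: field_simps)
qed

lemma continuous_map_cumulant:
  assumes "0 \<le> z"
  shows "continuous_map weak_topology_01 euclideanreal (\<lambda>M. cumulant M z)"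
  unfolding cumulant_def
proof (rule continuous_map_real_ln)
  show "continuous_map weak_topology_01 euclideanreal (\<lambda>M. LINT x|M. exp (z * x))"
    by (intro continuous_map_integral_01 continuous_intros)
  show "0 < (LINT x|M. exp (z * x))" if "M \<in> topspace weak_topology_01" for M
    using that integral_exp_ge_1[OF _ assms] by (force simp: topspace_weak_topology_01)
qed

lemma EVaR_cumulant: "EVaR \<alpha> M = (INF z\<in>{0<..}. (cumulant M z - ln (1 - \<alpha>)) / z)"
  unfolding EVaR_def cumulant_def by (simp add: divide_inverse mult.commute)

lemma grid_cell:
  fixes a h z :: real
  assumes h: "0 < h" and z: "a \<le> z" "z < a + real n * h"
  obtains i where "i < n" "a + real i * h \<le> z" "z < a + real (Suc i) * h"
proof
  define q where "q = (z - a) / h"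
  define i where "i = nat \<lfloor>q\<rfloor>"
  have "0 \<le> q"
    using h z unfolding q_def by simp
  then have i: "real i \<le> q" "q < real i + 1"
    unfolding i_def by linarith+
  have "q < real n"
    using h z unfolding q_def by (simp add: divide_less_eq mult.commute)
  with i show "i < n"
    by linarith
  show "a + real i * h \<le> z"
    using i h unfolding q_def by (simp add: le_divide_eq)
  show "z < a + real (Suc i) * h"
    using i h unfolding q_def by (simp add: divide_less_eq algebra_simps)
qed

context
  fixes \<alpha> :: real
  assumes \<alpha>: "0 < \<alpha>" "\<alpha> < 1"
begin

lemma EVaR_objective_nonneg:
  assumes "M \<in> prob_measures_01" "0 < z"
  shows "0 \<le> (cumulant M z - ln (1 - \<alpha>)) / z"
proof -
  have "ln (1 - \<alpha>) < 0"
    using \<alpha> by simp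
  then show ?thesis
    using assms cumulant_nonneg[OF assms(1), of z] by (intro divide_nonneg_pos) auto
qed

lemma bdd_below_EVaR_objective:
  "M \<in> prob_measures_01 \<Longrightarrow> bdd_below ((\<lambda>z. (cumulant M z - ln (1 - \<alpha>)) / z) ` {0<..})"
  using EVaR_objective_nonneg by (intro bdd_belowI[of _ 0]) auto

lemma EVaR_le:
  assumes "M \<in> prob_measures_01" "0 < z"
  shows "EVaR \<alpha> M \<le> (cumulant M z - ln (1 - \<alpha>)) / z"
  unfolding EVaR_cumulant using assms by (intro cINF_lower bdd_below_EVaR_objective) auto

lemma EVaR_nonneg: "M \<in> prob_measures_01 \<Longrightarrow> 0 \<le> EVaR \<alpha> M"
  unfolding EVaR_cumulant using EVaR_objective_nonneg by (intro cINF_greatest) auto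

lemma le_EVaR:
  assumes "\<And>z. 0 < z \<Longrightarrow> w * z \<le> cumulant M z - ln (1 - \<alpha>)"
  shows "w \<le> EVaR \<alpha> M"
  unfolding EVaR_cumulant using assms by (intro cINF_greatest) (auto simp: le_divide_eq)

lemma EVaR_less_iff:
  assumes "M \<in> prob_measures_01"
  shows "EVaR \<alpha> M < c \<longleftrightarrow> (\<exists>z>0. (cumulant M z - ln (1 - \<alpha>)) / z < c)"
  unfolding EVaR_cumulant using cINF_less_iff[OF _ bdd_below_EVaR_objective[OF assms]] by auto

lemma openin_EVaR_less: "openin weak_topology_01 {M \<in> prob_measures_01. EVaR \<alpha> M < c}"
proof -
  have "{M \<in> prob_measures_01. EVaR \<alpha> M < c}
      = (\<Union>z\<in>{0<..}. {M \<in> topspace weak_topology_01. (cumulant M z - ln (1 - \<alpha>)) / z \<in> {..<c}})"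
    by (auto simp: EVaR_less_iff topspace_weak_topology_01)
  also have "openin weak_topology_01 \<dots>"
  proof -
    have "openin weak_topology_01
            {M \<in> topspace weak_topology_01. (cumulant M z - ln (1 - \<alpha>)) / z \<in> {..<c}}"
      if "0 < z" for z
    proof -
      have "continuous_map weak_topology_01 euclideanreal (\<lambda>M. (cumulant M z - ln (1 - \<alpha>)) / z)"
        using that by (intro continuous_map_real_divide continuous_map_diff continuous_map_cumulant) auto
      then show ?thesis
        by (rule openin_continuous_map_preimage) simp
    qed
    then show ?thesis
      by (intro openin_Union) auto
  qed
  finally show ?thesis .
qed

text \<open>Lower bounds on EVaR need only finitely many values of the cumulant: for
  \<open>z \<le> \<delta>\<close> the term \<open>\<rho>/z\<close> dominates, beyond the last grid point monotonicity of
  \<open>cumulant M z / z\<close> reduces everything to that point, and in between the grid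
  controls \<open>z\<close> through monotonicity of the cumulant.\<close>

lemma le_EVaR_of_grid:
  assumes M: "M \<in> prob_measures_01" and w: "0 \<le> w" and \<delta>: "0 < \<delta>" and h: "0 < h"
    and small: "w * \<delta> \<le> - ln (1 - \<alpha>)"
    and grid: "\<And>i. i < n \<Longrightarrow> w * (\<delta> + real (Suc i) * h) \<le> cumulant M (\<delta> + real i * h) - ln (1 - \<alpha>)"
    and large: "w * (\<delta> + real n * h) \<le> cumulant M (\<delta> + real n * h)"
  shows "w \<le> EVaR \<alpha> M"
proof (rule le_EVaR)
  fix z :: real assume z: "0 < z"
  define Z where "Z = \<delta> + real n * h"
  have \<rho>: "0 \<le> - ln (1 - \<alpha>)"
    using \<alpha> by simp
  consider "z \<le> \<delta>" | "Z \<le> z" | "\<delta> \<le> z" "z < Z"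
    by linarith
  then show "w * z \<le> cumulant M z - ln (1 - \<alpha>)"
  proof cases
    case 1
    then have "w * z \<le> w * \<delta>"
      using w by (rule mult_left_mono)
    then show ?thesis
      using small cumulant_nonneg[OF M, of z] z by linarith
  next
    case 2
    have Z: "0 < Z"
      using \<delta> h unfolding Z_def by (simp add: add_pos_nonneg)
    have "w \<le> cumulant M Z / Z"
      using large Z unfolding Z_def by (simp add: le_divide_eq)
    also have "\<dots> \<le> cumulant M z / z"
      using M Z 2 by (rule cumulant_ratio_mono)
    finally show ?thesis
      using z \<rho> by (simp add: le_divide_eq)
  next
    case 3
    then obtain i where i: "i < n" "\<delta> + real i * h \<le> z" "z < \<delta> + real (Suc i) * h"
      using grid_cell[OF h] unfolding Z_def by blast
    have "w * z \<le> w * (\<delta> + real (Suc i) * h)"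
      using w i(3) by (simp add: mult_left_mono)
    also have "\<dots> \<le> cumulant M (\<delta> + real i * h) - ln (1 - \<alpha>)"
      using i(1) by (rule grid)
    also have "\<dots> \<le> cumulant M z - ln (1 - \<alpha>)"
      using cumulant_mono[OF M _ i(2)] \<delta> h by simp
    finally show ?thesis .
  qed
qed

text \<open>The neighbourhood only asks the cumulant to drop by less than \<open>\<eta>\<close> at the grid
  points; the constants are chosen so that the slack \<open>EVaR \<alpha> M0 - w\<close> absorbs both \<open>\<eta>\<close>
  and the mesh \<open>h\<close>.\<close>

lemma EVaR_greater_neighbourhood:
  assumes M0: "M0 \<in> prob_measures_01" and c: "0 \<le> c" "c < EVaR \<alpha> M0"
  obtains T where "openin weak_topology_01 T" "M0 \<in> T" "\<And>M. M \<in> T \<Longrightarrow> c < EVaR \<alpha> M"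
proof -
  define \<rho> where "\<rho> = - ln (1 - \<alpha>)"
  define v where "v = EVaR \<alpha> M0"
  define w where "w = (c + v) / 2"
  define d where "d = v - w"
  define \<delta> where "\<delta> = \<rho> / w"
  define \<eta> where "\<eta> = d * \<delta> / 2"
  define h where "h = \<eta> / w"
  define n where "n = nat \<lceil>(\<rho> + \<eta>) / (d * h)\<rceil>"
  define z where "z i = \<delta> + real i * h" for i
  have \<rho>: "0 < \<rho>"
    unfolding \<rho>_def using \<alpha> by simp
  have w: "c < w" "0 < w" and d: "0 < d"
    using c unfolding w_def d_def v_def by auto
  have \<delta>: "0 < \<delta>" and \<eta>: "0 < \<eta>" and h: "0 < h"
    unfolding \<delta>_def \<eta>_def h_def using \<rho> w d by simp_all
  have z: "\<delta> \<le> z i" for i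
    unfolding z_def using h by simp
  have v: "v * z i \<le> cumulant M0 (z i) + \<rho>" for i
    using EVaR_le[OF M0, of "z i"] z[of i] \<delta>
    unfolding v_def \<rho>_def by (simp add: le_divide_eq)
  define T where
    "T = {M \<in> topspace weak_topology_01. \<forall>i\<le>n. cumulant M0 (z i) - \<eta> < cumulant M (z i)}"
  have "openin weak_topology_01 T"
  proof -
    have "T = (\<Inter>i\<in>{..n}. {M \<in> topspace weak_topology_01. cumulant M (z i) \<in> {cumulant M0 (z i) - \<eta><..}})
              \<inter> topspace weak_topology_01"
      unfolding T_def by auto
    also have "openin weak_topology_01 \<dots>"
    proof (intro openin_INT)
      fix i
      show "openin weak_topology_01
              {M \<in> topspace weak_topology_01. cumulant M (z i) \<in> {cumulant M0 (z i) - \<eta><..}}"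
        using z[of i] \<delta> by (intro openin_continuous_map_preimage[OF continuous_map_cumulant]) auto
    qed simp
    finally show ?thesis .
  qed
  moreover have "M0 \<in> T"
    using M0 \<eta> unfolding T_def by (simp add: topspace_weak_topology_01)
  moreover have "c < EVaR \<alpha> M" if "M \<in> T" for M
  proof -
    have M: "M \<in> prob_measures_01" and close: "\<And>i. i \<le> n \<Longrightarrow> cumulant M0 (z i) - \<eta> < cumulant M (z i)"
      using that unfolding T_def topspace_weak_topology_01 by auto
    have "w \<le> EVaR \<alpha> M"
    proof (rule le_EVaR_of_grid[OF M _ \<delta> h])
      show "w * \<delta> \<le> - ln (1 - \<alpha>)"
        using w unfolding \<delta>_def \<rho>_def by simp
      show "w * (\<delta> + real (Suc i) * h) \<le> cumulant M (\<delta> + real i * h) - ln (1 - \<alpha>)" if "i < n" for i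
      proof -
        have "w * (\<delta> + real (Suc i) * h) = w * z i + \<eta>"
          using w unfolding z_def h_def by (simp add: algebra_simps)
        also have "\<dots> \<le> v * z i - \<eta>"
          using mult_left_mono[OF z[of i] less_imp_le[OF d]] unfolding d_def \<eta>_def by (simp add: algebra_simps)
        also have "\<dots> < cumulant M (z i) + \<rho>"
          using v[of i] close[of i] that by simp
        finally show ?thesis
          unfolding z_def \<rho>_def by simp
      qed
      have "(\<rho> + \<eta>) / (d * h) \<le> real n"
        unfolding n_def by (rule real_nat_ceiling_ge)
      then have "\<rho> + \<eta> \<le> d * (real n * h)"
        using mult_pos_pos[OF d h] by (simp add: pos_divide_le_eq algebra_simps)
      also have "\<dots> \<le> d * z n"
        using d \<delta> unfolding z_def by simp
      finally have "\<rho> + \<eta> \<le> d * z n" .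
      then show "w * (\<delta> + real n * h) \<le> cumulant M (\<delta> + real n * h)"
        using v[of n] close[of n] unfolding z_def d_def by (simp add: algebra_simps)
    qed (use w in simp)
    with w show ?thesis
      by simp
  qed
  ultimately show ?thesis
    using that by blast
qed

lemma openin_EVaR_greater:
  assumes "0 \<le> c"
  shows "openin weak_topology_01 {M \<in> prob_measures_01. c < EVaR \<alpha> M}"
proof (subst openin_subopen, intro ballI)
  fix M0 assume "M0 \<in> {M \<in> prob_measures_01. c < EVaR \<alpha> M}"
  then obtain T where T: "openin weak_topology_01 T" "M0 \<in> T" "\<And>M. M \<in> T \<Longrightarrow> c < EVaR \<alpha> M"
    using EVaR_greater_neighbourhood assms by blast
  then have "T \<subseteq> {M \<in> prob_measures_01. c < EVaR \<alpha> M}"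
    using openin_subset[OF T(1)] by (auto simp: topspace_weak_topology_01)
  with T show "\<exists>T. openin weak_topology_01 T \<and> M0 \<in> T \<and> T \<subseteq> {M \<in> prob_measures_01. c < EVaR \<alpha> M}"
    by blast
qed

lemma closedin_EVaR_le: "closedin weak_topology_01 {M \<in> prob_measures_01. EVaR \<alpha> M \<le> c}"
proof (cases "0 \<le> c")
  case True
  have "topspace weak_topology_01 - {M \<in> prob_measures_01. EVaR \<alpha> M \<le> c}
      = {M \<in> prob_measures_01. c < EVaR \<alpha> M}"
    by (auto simp: topspace_weak_topology_01)
  then show ?thesis
    using openin_EVaR_greater[OF True] by (simp add: closedin_def topspace_weak_topology_01)
next
  case False
  then have "{M \<in> prob_measures_01. EVaR \<alpha> M \<le> c} = {}"
    using EVaR_nonneg by force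
  then show ?thesis
    by (metis closedin_empty)
qed

lemma closedin_EVaR_ge: "closedin weak_topology_01 {M \<in> prob_measures_01. c \<le> EVaR \<alpha> M}"
proof -
  have "topspace weak_topology_01 - {M \<in> prob_measures_01. c \<le> EVaR \<alpha> M}
      = {M \<in> prob_measures_01. EVaR \<alpha> M < c}"
    by (auto simp: topspace_weak_topology_01)
  then show ?thesis
    using openin_EVaR_less by (simp add: closedin_def topspace_weak_topology_01)
qed

end

theorem corollary4:
  fixes \<alpha> c :: real
  assumes "0 < \<alpha>" and "\<alpha> < 1"
  shows "closedin weak_topology_01 {M \<in> prob_measures_01. EVaR \<alpha> M \<le> c}
       \<and> closedin weak_topology_01 {M \<in> prob_measures_01. EVaR \<alpha> M \<ge> c}
       \<and> compactin weak_topology_01 {M \<in> prob_measures_01. EVaR \<alpha> M \<le> c}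
       \<and> compactin weak_topology_01 {M \<in> prob_measures_01. EVaR \<alpha> M \<ge> c}"
  using closedin_EVaR_le[OF assms] closedin_EVaR_ge[OF assms]
    closed_compactin[OF compactin_prob_measures_01] by auto

end
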